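(* Let $G=D\rtimes M$ be a finite soluble group such that: (i) $D$ is an abelian Hall subgroup of $G$ of odd order and $M$ is a $\sigma$-nilpotent $M$-group; (ii) every element of $G$ induces a power automorphism on $D$; (iii) for every $i$, $O_{\sigma_i}(D)$ has a normal complement in a Hall $\sigma_i$-subgroup of $G$. If $A$ is a $\sigma$-primary $\sigma$-subnormal subgroup of $G$ with $A\le M$, then $D\le C_G(A)$.
   Context: $\sigma=\{\sigma_i\mid i\in I\}$ is a partition of the set of all primes. A group is $\sigma$-primary if it is a $\sigma_i$-group for some $i$, and $\sigma$-nilpotent if it is a direct product of $\sigma$-primary groups. A Hall $\sigma_i$-subgroup is a $\sigma_i$-subgroup whose index involves no prime of $\sigma_i$; $O_{\sigma_i}(D)$ is the largest normal $\sigma_i$-subgroup of $D$. $A_G$ is the core of $A$ in $G$. $A$ is $\sigma$-subnormal in $G$ if there is a chain $A=A_0\le\cdots\le A_n=G$ with, for each $i$, $A_{i-1}\trianglelefteq A_i$ or $A_i/(A_{i-1})_{A_i}$ $\sigma$-primary. An $M$-group is a group whose subgroup lattice is modular. A power automorphism is an automorphism mapping every subgroup to itself. *)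

theory Defs
  imports "HOL-Algebra.Algebra" "HOL-Computational_Algebra.Primes"
begin

definition sigma_partition :: "nat set set \<Rightarrow> bool" where
  "sigma_partition Sig \<longleftrightarrow>
     (\<forall>s\<in>Sig. s \<noteq> {}) \<and> \<Union>Sig = {p. Factorial_Ring.prime (p::nat)} \<and>
     (\<forall>s\<in>Sig. \<forall>t\<in>Sig. s \<noteq> t \<longrightarrow> s \<inter> t = {})"

definition pi_set :: "nat set \<Rightarrow> 'a set \<Rightarrow> bool" where
  "pi_set \<pi> H \<longleftrightarrow> (\<forall>p. Factorial_Ring.prime (p::nat) \<longrightarrow> p dvd card H \<longrightarrow> p \<in> \<pi>)"

definition sigma_primary :: "nat set set \<Rightarrow> 'a set \<Rightarrow> bool" where
  "sigma_primary Sig H \<longleftrightarrow> (\<exists>s\<in>Sig. pi_set s H)"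

definition sigma_nilpotent :: "('a, 'b) monoid_scheme \<Rightarrow> nat set set \<Rightarrow> 'a set \<Rightarrow> bool" where
  "sigma_nilpotent G Sig M \<longleftrightarrow>
     (\<exists>Hs. finite Hs \<and>
        (\<forall>H\<in>Hs. normal H (G\<lparr>carrier := M\<rparr>) \<and> sigma_primary Sig H) \<and>
        generate G (\<Union>Hs) = M \<and>
        (\<forall>H\<in>Hs. H \<inter> generate G (\<Union>(Hs - {H})) = {\<one>\<^bsub>G\<^esub>}))"

definition modular_subgroup_lattice :: "('a, 'b) monoid_scheme \<Rightarrow> 'a set \<Rightarrow> bool" where
  "modular_subgroup_lattice G M \<longleftrightarrow>
     (\<forall>U V W. subgroup U G \<and> subgroup V G \<and> subgroup W G \<and> U \<subseteq> M \<and> V \<subseteq> M \<and> W \<subseteq> M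
        \<and> U \<subseteq> W \<longrightarrow> generate G (U \<union> V) \<inter> W = generate G (U \<union> (V \<inter> W)))"

definition hall_pi_subgroup :: "('a, 'b) monoid_scheme \<Rightarrow> nat set \<Rightarrow> 'a set \<Rightarrow> bool" where
  "hall_pi_subgroup G \<pi> H \<longleftrightarrow> subgroup H G \<and> pi_set \<pi> H \<and>
     (\<forall>p. Factorial_Ring.prime (p::nat) \<longrightarrow> p dvd (card (carrier G) div card H) \<longrightarrow> p \<notin> \<pi>)"

definition hall_subgroup :: "('a, 'b) monoid_scheme \<Rightarrow> 'a set \<Rightarrow> bool" where
  "hall_subgroup G H \<longleftrightarrow> subgroup H G \<and> coprime (card H) (card (carrier G) div card H)"

definition is_O_pi :: "('a, 'b) monoid_scheme \<Rightarrow> nat set \<Rightarrow> 'a set \<Rightarrow> 'a set \<Rightarrow> bool" where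
  "is_O_pi G \<pi> D Op \<longleftrightarrow> normal Op (G\<lparr>carrier := D\<rparr>) \<and> pi_set \<pi> Op \<and>
     (\<forall>K. normal K (G\<lparr>carrier := D\<rparr>) \<and> pi_set \<pi> K \<longrightarrow> K \<subseteq> Op)"

definition core_in :: "('a, 'b) monoid_scheme \<Rightarrow> 'a set \<Rightarrow> 'a set \<Rightarrow> 'a set" where
  "core_in G B A = (\<Inter>b\<in>B. {b \<otimes>\<^bsub>G\<^esub> a \<otimes>\<^bsub>G\<^esub> inv\<^bsub>G\<^esub> b | a. a \<in> A})"

inductive sigma_subnormal :: "('a, 'b) monoid_scheme \<Rightarrow> nat set set \<Rightarrow> 'a set \<Rightarrow> bool"
  for G Sig where
  top: "sigma_subnormal G Sig (carrier G)"
| step: "sigma_subnormal G Sig B \<Longrightarrow> subgroup A G \<Longrightarrow> A \<subseteq> B \<Longrightarrow>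
          normal A (G\<lparr>carrier := B\<rparr>) \<or>
          (\<exists>s\<in>Sig. \<forall>p. Factorial_Ring.prime (p::nat) \<longrightarrow> p dvd (card B div card (core_in G B A)) \<longrightarrow> p \<in> s)
          \<Longrightarrow> sigma_subnormal G Sig A"

definition induces_power_automorphisms :: "('a, 'b) monoid_scheme \<Rightarrow> 'a set \<Rightarrow> bool" where
  "induces_power_automorphisms G D \<longleftrightarrow>
     (\<forall>g\<in>carrier G. \<forall>H. subgroup H G \<and> H \<subseteq> D \<longrightarrow>
        {g \<otimes>\<^bsub>G\<^esub> h \<otimes>\<^bsub>G\<^esub> inv\<^bsub>G\<^esub> g | h. h \<in> H} = H)"

definition centralizes :: "('a, 'b) monoid_scheme \<Rightarrow> 'a set \<Rightarrow> 'a set \<Rightarrow> bool" where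
  "centralizes G D A \<longleftrightarrow> (\<forall>d\<in>D. \<forall>a\<in>A. d \<otimes>\<^bsub>G\<^esub> a = a \<otimes>\<^bsub>G\<^esub> d)"

end

theory Submission
  imports Defs
begin

(* Let A be a \<sigma>\<^sub>s-group.  By induction along a \<sigma>-subnormal chain, |Z : Z \<inter> H| is a
   \<sigma>\<^sub>s'-number for every member Z of the chain and every Hall \<sigma>\<^sub>s-subgroup H; for Z = A
   this forces A \<le> H.  In the Hall subgroup H = N O\<^sub>s(D) of (iii) the normal subgroups N and
   O\<^sub>s(D) meet trivially, hence commute, and D is abelian, so H centralizes O\<^sub>s(D).  For a
   \<sigma>\<^sub>s'-element y of D, A also lies in the conjugate Hall subgroup H\<^sup>y; thus for a \<in> A the
   commutator [a, y] lies in H and, since <y> is invariant under the power automorphisms, in the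
   \<sigma>\<^sub>s'-group <y>, so it is trivial.  Every element of D is a product of powers of its
   \<sigma>\<^sub>s- and \<sigma>\<^sub>s'-parts, so A centralizes D. *)

section \<open>\<pi>-numbers\<close>

definition pi_number :: "nat set \<Rightarrow> nat \<Rightarrow> bool" where
  "pi_number \<pi> n \<longleftrightarrow> (\<forall>p. Factorial_Ring.prime p \<longrightarrow> p dvd n \<longrightarrow> p \<in> \<pi>)"

definition pi'_number :: "nat set \<Rightarrow> nat \<Rightarrow> bool" where
  "pi'_number \<pi> n \<longleftrightarrow> (\<forall>p. Factorial_Ring.prime p \<longrightarrow> p dvd n \<longrightarrow> p \<notin> \<pi>)"

lemma pi_number_dvd: "pi_number \<pi> n \<Longrightarrow> m dvd n \<Longrightarrow> pi_number \<pi> m"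
  unfolding pi_number_def using dvd_trans by blast

lemma pi'_number_dvd: "pi'_number \<pi> n \<Longrightarrow> m dvd n \<Longrightarrow> pi'_number \<pi> m"
  unfolding pi'_number_def using dvd_trans by blast

lemma pi_number_mult: "pi_number \<pi> m \<Longrightarrow> pi_number \<pi> n \<Longrightarrow> pi_number \<pi> (m * n)"
  unfolding pi_number_def by (metis prime_dvd_mult_iff)

lemma pi'_number_if_disjoint: "pi_number \<tau> n \<Longrightarrow> \<pi> \<inter> \<tau> = {} \<Longrightarrow> pi'_number \<pi> n"
  unfolding pi_number_def pi'_number_def by blast

lemma pi_number_pi'_number_eq_1: "pi_number \<pi> n \<Longrightarrow> pi'_number \<pi> n \<Longrightarrow> n = 1"
  unfolding pi_number_def pi'_number_def using prime_factor_nat by blast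

lemma coprime_pi_number_pi'_number: "pi_number \<pi> m \<Longrightarrow> pi'_number \<pi> n \<Longrightarrow> coprime m n"
  by (metis pi_number_dvd pi'_number_dvd gcd_dvd1 gcd_dvd2 pi_number_pi'_number_eq_1 coprime_iff_gcd_eq_1)

lemma pi_number_pi'_number_decomposition:
  fixes n :: nat
  assumes "n \<noteq> 0"
  obtains m1 m2 where "n = m1 * m2" "pi_number \<pi> m1" "pi'_number \<pi> m2"
proof
  let ?P = "prime_factorization n"
  have "n = prod_mset ({#p \<in># ?P. p \<in> \<pi>#} + {#p \<in># ?P. p \<notin> \<pi>#})"
    using assms by (simp add: prod_mset_prime_factorization)
  then show "n = prod_mset {#p \<in># ?P. p \<in> \<pi>#} * prod_mset {#p \<in># ?P. p \<notin> \<pi>#}"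
    by (simp only: prod_mset.union)
  have factor_in_P: "p \<in># M" if "Factorial_Ring.prime p" "p dvd prod_mset M" "M \<subseteq># ?P" for p M
    using that prime_dvd_prod_mset_primes_iff[of p M] by (auto dest: mset_subset_eqD)
  show "pi_number \<pi> (prod_mset {#p \<in># ?P. p \<in> \<pi>#})"
    unfolding pi_number_def using factor_in_P[OF _ _ multiset_filter_subset] by auto
  show "pi'_number \<pi> (prod_mset {#p \<in># ?P. p \<notin> \<pi>#})"
    unfolding pi'_number_def using factor_in_P[OF _ _ multiset_filter_subset] by auto
qed

lemma pi_set_iff: "pi_set \<pi> H \<longleftrightarrow> pi_number \<pi> (card H)"
  by (simp add: pi_set_def pi_number_def)

lemma hall_pi_subgroup_iff:
  "hall_pi_subgroup G \<pi> H \<longleftrightarrow>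
     subgroup H G \<and> pi_number \<pi> (card H) \<and> pi'_number \<pi> (card (carrier G) div card H)"
  by (simp add: hall_pi_subgroup_def pi_set_def pi_number_def pi'_number_def)

section \<open>Orders of subgroups and of their products\<close>

context group
begin

lemma m_inv_cancel_left [simp]: "x \<in> carrier G \<Longrightarrow> y \<in> carrier G \<Longrightarrow> x \<otimes> (inv x \<otimes> y) = y"
  by (simp add: m_assoc[symmetric])

lemma inv_m_cancel_left [simp]: "x \<in> carrier G \<Longrightarrow> y \<in> carrier G \<Longrightarrow> inv x \<otimes> (x \<otimes> y) = y"
  by (simp add: m_assoc[symmetric])

lemma card_subgroup_dvd:
  assumes "finite (carrier G)" "subgroup U G" "subgroup V G" "U \<subseteq> V"
  shows "card U dvd card V"
proof -
  interpret V: group "G\<lparr>carrier := V\<rparr>" using assms(3) by (rule subgroup_imp_group)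
  have "card (rcosets\<^bsub>G\<lparr>carrier := V\<rparr>\<^esub> U) * card U = card V"
    using V.lagrange subgroup_incl[OF assms(2-4)] by (simp add: order_def)
  then show ?thesis by (metis dvd_triv_right)
qed

lemma card_subgroup_pos: "finite (carrier G) \<Longrightarrow> subgroup U G \<Longrightarrow> card U > 0"
  by (metis card_gt_0_iff empty_iff finite_subset subgroup.one_closed subgroup.subset)

lemma subgroup_index_mult:
  assumes "finite (carrier G)" "subgroup U G" "subgroup V G" "subgroup W G" "U \<subseteq> V" "V \<subseteq> W"
  shows "card W div card U = (card W div card V) * (card V div card U)"
proof -
  obtain i where i: "card V = card U * i" using card_subgroup_dvd assms by (metis dvdE)
  obtain j where j: "card W = card V * j" using card_subgroup_dvd assms by (metis dvdE)
  have "card U > 0" "card V > 0" using card_subgroup_pos assms by auto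
  then show ?thesis using i j by (simp add: mult.commute mult.left_commute)
qed

lemma index_dvd_card:
  assumes "finite (carrier G)" "subgroup U G" "subgroup V G" "U \<subseteq> V"
  shows "card V div card U dvd card V"
proof -
  obtain i where "card V = card U * i" using card_subgroup_dvd[OF assms] by (auto elim: dvdE)
  then show ?thesis using card_subgroup_pos[OF assms(1,2)] by simp
qed

lemma subgroup_eq_if_index_pi_pi':
  assumes "finite (carrier G)" "subgroup U G" "subgroup V G" "U \<subseteq> V"
    and "pi_number \<pi> (card V div card U)" "pi'_number \<pi> (card V div card U)"
  shows "U = V"
proof -
  have "card V div card U = 1" using assms(5,6) by (rule pi_number_pi'_number_eq_1)
  then have "card U = card V"
    using card_subgroup_dvd[OF assms(1-4)] card_subgroup_pos[OF assms(1,2)] by (metis dvd_mult_div_cancel mult_1_right)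
  then show ?thesis
    using assms(4) card_subset_eq finite_subset[OF subgroup.subset[OF assms(3)] assms(1)] by blast
qed

lemma subgroups_Int_eq_one_if_coprime:
  assumes "finite (carrier G)" "subgroup U G" "subgroup V G" "coprime (card U) (card V)"
  shows "U \<inter> V = {\<one>}"
proof -
  have UV: "subgroup (U \<inter> V) G" using assms(2,3) by (rule subgroups_Inter_pair)
  have "card (U \<inter> V) dvd card U" "card (U \<inter> V) dvd card V"
    using card_subgroup_dvd[OF assms(1) UV] assms(2,3) by auto
  then have "card (U \<inter> V) = 1" using assms(4) coprime_common_divisor_nat by blast
  then obtain x where "U \<inter> V = {x}" by (auto simp: card_1_singleton_iff)
  then show ?thesis using subgroup.one_closed[OF UV] by auto
qed

lemma card_set_mult_fiber:
  assumes "subgroup K G" "subgroup N G" "k \<in> K" "n \<in> N"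
  shows "card {j \<in> K \<times> N. fst j \<otimes> snd j = k \<otimes> n} = card (K \<inter> N)"
proof -
  note K = subgroup.mem_carrier[OF assms(1)] and N = subgroup.mem_carrier[OF assms(2)]
  let ?f = "\<lambda>t. (k \<otimes> t, inv t \<otimes> n)"
  have "{j \<in> K \<times> N. fst j \<otimes> snd j = k \<otimes> n} = ?f ` (K \<inter> N)"
  proof (intro equalityI subsetI)
    fix j assume "j \<in> {j \<in> K \<times> N. fst j \<otimes> snd j = k \<otimes> n}"
    then obtain k' n' where j: "j = (k', n')" "k' \<in> K" "n' \<in> N" "k' \<otimes> n' = k \<otimes> n" by auto
    have k': "k' = k \<otimes> n \<otimes> inv n'"
      using inv_solve_right[of k' "k \<otimes> n" n'] j K N assms by simp
    have n': "n' = inv k' \<otimes> (k \<otimes> n)"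
      using inv_solve_left[of n' k' "k \<otimes> n"] j K N assms by simp
    have "inv k \<otimes> k' = n \<otimes> inv n'"
      using K N assms j(3) by (simp add: k' m_assoc[symmetric])
    then have "inv k \<otimes> k' \<in> K \<inter> N"
      using j assms by (metis IntI subgroup.m_closed subgroup.m_inv_closed)
    moreover have "j = ?f (inv k \<otimes> k')"
      using j(1-3) assms K N by (simp add: n' inv_mult_group m_assoc[symmetric])
    ultimately show "j \<in> ?f ` (K \<inter> N)" by blast
  next
    fix j assume "j \<in> ?f ` (K \<inter> N)"
    then obtain t where "t \<in> K" "t \<in> N" "j = ?f t" by blast
    moreover have "k \<otimes> t \<otimes> inv t = k"
      using \<open>t \<in> K\<close> assms K by (simp add: m_assoc)
    then have "(k \<otimes> t) \<otimes> (inv t \<otimes> n) = k \<otimes> n"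
      using \<open>t \<in> K\<close> assms K N by (simp add: m_assoc[symmetric])
    ultimately show "j \<in> {j \<in> K \<times> N. fst j \<otimes> snd j = k \<otimes> n}"
      using assms by (simp add: subgroup.m_closed subgroup.m_inv_closed)
  qed
  moreover have "inj_on ?f (K \<inter> N)"
    using assms K by (intro inj_onI) simp
  ultimately show ?thesis by (simp add: card_image)
qed

lemma card_set_mult:
  assumes "finite (carrier G)" "subgroup K G" "subgroup N G"
  shows "card (K <#> N) * card (K \<inter> N) = card K * card N"
proof -
  have fin: "finite K" "finite N"
    using assms finite_subset subgroup.subset by metis+
  have "finite (K <#> N)"
    using assms(1) finite_subset setmult_subset_G subgroup.subset assms(2,3) by metis
  moreover have "\<forall>j\<in>K \<times> N. card {x \<in> K <#> N. fst j \<otimes> snd j = x} = 1"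
  proof
    fix j assume "j \<in> K \<times> N"
    then have "{x \<in> K <#> N. fst j \<otimes> snd j = x} = {fst j \<otimes> snd j}"
      by (auto simp: set_mult_def mem_Times_iff)
    then show "card {x \<in> K <#> N. fst j \<otimes> snd j = x} = 1" by simp
  qed
  ultimately have "(\<Sum>x\<in>K <#> N. card {j \<in> K \<times> N. fst j \<otimes> snd j = x}) = 1 * card (K \<times> N)"
    using fin by (intro sum_multicount) auto
  moreover have "card {j \<in> K \<times> N. fst j \<otimes> snd j = x} = card (K \<inter> N)" if "x \<in> K <#> N" for x
    using that card_set_mult_fiber[OF assms(2,3)] by (auto simp: set_mult_def)
  ultimately show ?thesis by (simp add: card_cartesian_product)
qed

lemma card_set_mult_div:
  assumes "finite (carrier G)" "subgroup K G" "subgroup N G"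
  shows "card (K <#> N) div card N = card K div card (K \<inter> N)"
    and "card (K <#> N) div card K = card N div card (K \<inter> N)"
proof -
  have KN: "subgroup (K \<inter> N) G" using assms(2,3) by (rule subgroups_Inter_pair)
  obtain q where q: "card K = card (K \<inter> N) * q"
    using card_subgroup_dvd[OF assms(1) KN assms(2)] by (auto elim: dvdE)
  obtain r where r: "card N = card (K \<inter> N) * r"
    using card_subgroup_dvd[OF assms(1) KN assms(3)] by (auto elim: dvdE)
  have pos: "card (K \<inter> N) > 0" "card K > 0" "card N > 0"
    using card_subgroup_pos assms KN by auto
  have prod: "card (K <#> N) * card (K \<inter> N) = card K * card N"
    using assms by (rule card_set_mult)
  then have "card (K <#> N) = q * card N" using q pos by (simp add: mult.commute mult.left_commute)
  then show "card (K <#> N) div card N = card K div card (K \<inter> N)" using q pos by simp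
  have "card (K <#> N) = card K * r" using prod r pos by (simp add: mult.commute mult.left_commute)
  then show "card (K <#> N) div card K = card N div card (K \<inter> N)" using r pos by simp
qed

lemma normal_set_mult_subgroup:
  assumes "N \<lhd> G\<lparr>carrier := B\<rparr>" "subgroup B G" "subgroup K G" "K \<subseteq> B"
  shows "subgroup (N <#> K) G" and "N <#> K \<subseteq> B"
proof -
  interpret B: group "G\<lparr>carrier := B\<rparr>" using assms(2) by (rule subgroup_imp_group)
  have "subgroup (N <#> K) (G\<lparr>carrier := B\<rparr>)"
    using B.mult_norm_subgroup[OF assms(1) subgroup_incl[OF assms(3,2,4)]] by simp
  then show "subgroup (N <#> K) G" and "N <#> K \<subseteq> B"
    using incl_subgroup[OF assms(2)] subgroup.subset by force+
qed

lemma subset_set_mult: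
  assumes "subgroup N G" "subgroup K G"
  shows "N \<subseteq> N <#> K" and "K \<subseteq> N <#> K"
  using assms subgroup.one_closed subgroup.mem_carrier unfolding set_mult_def by force+

lemma set_mult_eq_left:
  assumes "subgroup A G" "subgroup K G" "K \<subseteq> A"
  shows "A <#> K = A"
proof
  show "A <#> K \<subseteq> A" using assms by (auto simp: set_mult_def intro: subgroup.m_closed)
  show "A \<subseteq> A <#> K" using assms(1,2) by (rule subset_set_mult)
qed

lemma conjugate_eq_cosets:
  "{g \<otimes> h \<otimes> inv g | h. h \<in> H} = g <# H #> inv g"
  by (auto simp: l_coset_def r_coset_def)

lemma conjugate_subgroup:
  assumes "g \<in> carrier G" "subgroup H G"
  shows "subgroup {g \<otimes> h \<otimes> inv g | h. h \<in> H} G"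
  using subgroup_conjugation_is_surj1[of "inv g" H] assms by (simp add: conjugate_eq_cosets)

lemma card_conjugate:
  assumes "g \<in> carrier G" "subgroup H G"
  shows "card {g \<otimes> h \<otimes> inv g | h. h \<in> H} = card H"
proof -
  have "{g \<otimes> h \<otimes> inv g | h. h \<in> H} = (\<lambda>h. g \<otimes> h \<otimes> inv g) ` H" by blast
  moreover have "inj_on (\<lambda>h. g \<otimes> h \<otimes> inv g) H"
    using assms subgroup.mem_carrier by (force intro: inj_onI)
  ultimately show ?thesis by (simp add: card_image)
qed

lemma core_in_subset:
  assumes "subgroup B G" "A \<subseteq> carrier G"
  shows "core_in G B A \<subseteq> A"
  using assms subgroup.one_closed unfolding core_in_def by fastforce

lemma core_in_normal:
  assumes "subgroup A G" "subgroup B G" "A \<subseteq> B"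
  shows "core_in G B A \<lhd> G\<lparr>carrier := B\<rparr>"
proof -
  interpret B: group "G\<lparr>carrier := B\<rparr>" using assms(2) by (rule subgroup_imp_group)
  have "subgroup (core_in G B A) G"
    unfolding core_in_def
    using conjugate_subgroup[OF subgroup.mem_carrier[OF assms(2)] assms(1)] subgroup.one_closed[OF assms(2)]
    by (intro subgroups_Inter) auto
  then have sub: "subgroup (core_in G B A) (G\<lparr>carrier := B\<rparr>)"
    using core_in_subset[OF assms(2) subgroup.subset[OF assms(1)]] assms by (blast intro: subgroup_incl)
  have "b \<otimes> c \<otimes> inv b \<in> core_in G B A" if b: "b \<in> B" and c: "c \<in> core_in G B A" for b c
    unfolding core_in_def
  proof
    fix b' assume b': "b' \<in> B"
    have "inv b \<otimes> b' \<in> B" using assms(2) b b' by (simp add: subgroup.m_closed subgroup.m_inv_closed)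
    then obtain a where a: "a \<in> A" "c = (inv b \<otimes> b') \<otimes> a \<otimes> inv (inv b \<otimes> b')"
      using c unfolding core_in_def by blast
    have "b \<in> carrier G" "b' \<in> carrier G" "a \<in> carrier G"
      using assms b b' a(1) subgroup.mem_carrier by (metis subsetD)+
    then have "b \<otimes> c \<otimes> inv b = b' \<otimes> a \<otimes> inv b'"
      by (simp add: a(2) inv_mult_group m_assoc)
    then show "b \<otimes> c \<otimes> inv b \<in> {b' \<otimes> a \<otimes> inv b' | a. a \<in> A}" using a(1) by blast
  qed
  then show ?thesis
    using sub assms(2) by (simp add: B.normal_inv_iff m_inv_consistent)
qed

end

section \<open>\<sigma>-subnormal \<sigma>-primary subgroups lie in Hall subgroups\<close>

context group
begin

lemma pi_subgroup_subset_normal_of_pi'_index: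
  assumes fin: "finite (carrier G)" and N: "N \<lhd> G\<lparr>carrier := B\<rparr>" and B: "subgroup B G"
    and K: "subgroup K G" "K \<subseteq> B" "pi_number \<pi> (card K)"
    and index: "pi'_number \<pi> (card B div card N)"
  shows "K \<subseteq> N"
proof -
  have NG: "subgroup N G"
    using N B incl_subgroup normal_imp_subgroup by blast
  have NK: "subgroup (N <#> K) G" "N <#> K \<subseteq> B"
    using normal_set_mult_subgroup[OF N B K(1,2)] by auto
  note N_NK = subset_set_mult(1)[OF NG K(1)]
  have "card (N <#> K) div card N = card K div card (N \<inter> K)"
    by (rule card_set_mult_div(2)[OF fin NG K(1)])
  also have "\<dots> dvd card K"
    by (rule index_dvd_card[OF fin subgroups_Inter_pair[OF NG K(1)] K(1)]) blast
  finally have "pi_number \<pi> (card (N <#> K) div card N)"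
    by (rule pi_number_dvd[OF K(3)])
  moreover have "card B div card N = (card B div card (N <#> K)) * (card (N <#> K) div card N)"
    by (rule subgroup_index_mult[OF fin NG NK(1) B N_NK NK(2)])
  then have "pi'_number \<pi> (card (N <#> K) div card N)"
    using pi'_number_dvd[OF index] by simp
  ultimately have "N = N <#> K"
    by (rule subgroup_eq_if_index_pi_pi'[OF fin NG NK(1) N_NK])
  then show ?thesis using subset_set_mult(2)[OF NG K(1)] by blast
qed

lemma normal_set_mult_eq_of_pi_index:
  assumes fin: "finite (carrier G)" and N: "N \<lhd> G\<lparr>carrier := B\<rparr>" and B: "subgroup B G"
    and K: "subgroup K G" "K \<subseteq> B" "pi'_number \<pi> (card B div card K)"
    and index: "pi_number \<pi> (card B div card N)"
  shows "N <#> K = B"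
proof -
  have NG: "subgroup N G"
    using N B incl_subgroup normal_imp_subgroup by blast
  have NK: "subgroup (N <#> K) G" "N <#> K \<subseteq> B"
    using normal_set_mult_subgroup[OF N B K(1,2)] by auto
  have "card B div card N = (card B div card (N <#> K)) * (card (N <#> K) div card N)"
    by (rule subgroup_index_mult[OF fin NG NK(1) B subset_set_mult(1)[OF NG K(1)] NK(2)])
  then have "pi_number \<pi> (card B div card (N <#> K))"
    using pi_number_dvd[OF index] by simp
  moreover have "card B div card K = (card B div card (N <#> K)) * (card (N <#> K) div card K)"
    by (rule subgroup_index_mult[OF fin K(1) NK(1) B subset_set_mult(2)[OF NG K(1)] NK(2)])
  then have "pi'_number \<pi> (card B div card (N <#> K))"
    using pi'_number_dvd[OF K(3)] by simp
  ultimately show ?thesis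
    by (rule subgroup_eq_if_index_pi_pi'[OF fin NK(1) B NK(2)])
qed

lemma index_Int_dvd_of_set_mult_subgroup:
  assumes fin: "finite (carrier G)" and A: "subgroup A G" and K: "subgroup K G" and B: "subgroup B G"
    and AK: "subgroup (A <#> K) G" "A <#> K \<subseteq> B"
  shows "card A div card (A \<inter> K) dvd card B div card K"
proof -
  have "card B div card K = (card B div card (A <#> K)) * (card (A <#> K) div card K)"
    by (rule subgroup_index_mult[OF fin K AK(1) B subset_set_mult(2)[OF A K] AK(2)])
  then show ?thesis
    using card_set_mult_div(1)[OF fin A K] by simp
qed

lemma sigma_subnormal_step_set_mult_subgroup:
  assumes fin: "finite (carrier G)" and Sig: "sigma_partition Sig" "s \<in> Sig"
    and B: "subgroup B G" and A: "subgroup A G" "A \<subseteq> B"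
    and K: "subgroup K G" "K \<subseteq> B" "pi_number s (card K)" "pi'_number s (card B div card K)"
    and step: "A \<lhd> G\<lparr>carrier := B\<rparr> \<or> (\<exists>t\<in>Sig. pi_number t (card B div card (core_in G B A)))"
  shows "subgroup (A <#> K) G"
  \<comment> \<open>K is a Hall s-subgroup of B: either A is normal in B, or the core of A supplements K
     (index an s-number), or it contains K (index a t-number with t \<noteq> s).\<close>
  using step
proof
  assume "A \<lhd> G\<lparr>carrier := B\<rparr>"
  then show ?thesis using B K(1,2) by (rule normal_set_mult_subgroup)
next
  assume "\<exists>t\<in>Sig. pi_number t (card B div card (core_in G B A))"
  then obtain t where t: "t \<in> Sig" "pi_number t (card B div card (core_in G B A))" by blast
  have core: "core_in G B A \<lhd> G\<lparr>carrier := B\<rparr>" "core_in G B A \<subseteq> A"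
    using core_in_normal[OF A(1) B A(2)] core_in_subset[OF B subgroup.subset[OF A(1)]] by auto
  show ?thesis
  proof (cases "t = s")
    case True
    then have "core_in G B A <#> K = B"
      using normal_set_mult_eq_of_pi_index[OF fin core(1) B K(1,2,4)] t(2) by simp
    moreover have "core_in G B A <#> K \<subseteq> A <#> K" "A <#> K \<subseteq> B"
      using core(2) A B K by (auto simp: set_mult_def intro: subgroup.m_closed)
    ultimately have "A <#> K = B" by blast
    then show ?thesis using B by simp
  next
    case False
    then have "s \<inter> t = {}"
      using Sig t(1) unfolding sigma_partition_def by blast
    then have "pi'_number s (card B div card (core_in G B A))"
      using t(2) by (intro pi'_number_if_disjoint)
    then have "K \<subseteq> A"
      using pi_subgroup_subset_normal_of_pi'_index[OF fin core(1) B K(1-3)] core(2) by blast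
    then show ?thesis using set_mult_eq_left A(1) K(1) by simp
  qed
qed

lemma sigma_subnormal_subgroup: "sigma_subnormal G Sig Z \<Longrightarrow> subgroup Z G"
  by (cases rule: sigma_subnormal.cases) (auto intro: subgroup_self)

lemma sigma_subnormal_index_Int_hall:
  assumes fin: "finite (carrier G)" and Sig: "sigma_partition Sig" "s \<in> Sig"
    and H: "hall_pi_subgroup G s H"
  shows "sigma_subnormal G Sig Z \<Longrightarrow> pi'_number s (card Z div card (Z \<inter> H))"
proof (induction rule: sigma_subnormal.induct)
  case top
  then show ?case
    using H subgroup.subset by (fastforce simp: hall_pi_subgroup_iff Int_absorb1)
next
  case (step B A)
  have B: "subgroup B G" using step.hyps(1) by (rule sigma_subnormal_subgroup)
  have HG: "subgroup H G" "pi_number s (card H)" using H by (auto simp: hall_pi_subgroup_iff)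
  let ?K = "B \<inter> H"
  have K: "subgroup ?K G" "?K \<subseteq> B" using subgroups_Inter_pair[OF B HG(1)] by auto
  have "pi_number s (card ?K)"
    using pi_number_dvd[OF HG(2) card_subgroup_dvd[OF fin K(1) HG(1)]] by blast
  moreover have "A \<lhd> G\<lparr>carrier := B\<rparr> \<or> (\<exists>t\<in>Sig. pi_number t (card B div card (core_in G B A)))"
    using step.hyps(4) unfolding pi_number_def .
  ultimately have AK: "subgroup (A <#> ?K) G"
    using sigma_subnormal_step_set_mult_subgroup[OF fin Sig B step.hyps(2,3) K] step.IH by blast
  have "A <#> ?K \<subseteq> B"
    using step.hyps(3) B K by (auto simp: set_mult_def intro: subgroup.m_closed)
  then have "card A div card (A \<inter> ?K) dvd card B div card ?K"
    by (rule index_Int_dvd_of_set_mult_subgroup[OF fin step.hyps(2) K(1) B AK])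
  moreover have "A \<inter> ?K = A \<inter> H" using step.hyps(3) by blast
  ultimately show ?case using pi'_number_dvd[OF step.IH] by simp
qed

lemma sigma_subnormal_pi_subgroup_subset_hall:
  assumes fin: "finite (carrier G)" and Sig: "sigma_partition Sig" "s \<in> Sig"
    and A: "sigma_subnormal G Sig A" "pi_set s A" and H: "hall_pi_subgroup G s H"
  shows "A \<subseteq> H"
proof -
  have AG: "subgroup A G" using A(1) by (rule sigma_subnormal_subgroup)
  have AH: "subgroup (A \<inter> H) G"
    using H AG by (intro subgroups_Inter_pair) (auto simp: hall_pi_subgroup_iff)
  have "pi_number s (card A div card (A \<inter> H))"
    using pi_number_dvd[OF A(2)[unfolded pi_set_iff] index_dvd_card[OF fin AH AG]] by blast
  then have "A \<inter> H = A"
    using subgroup_eq_if_index_pi_pi'[OF fin AH AG]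
      sigma_subnormal_index_Int_hall[OF fin Sig H A(1)] by blast
  then show ?thesis by blast
qed

end

section \<open>Centralizers and power automorphisms\<close>

definition centralizer :: "('a, 'b) monoid_scheme \<Rightarrow> 'a set \<Rightarrow> 'a set" where
  "centralizer G A = {x \<in> carrier G. \<forall>a\<in>A. x \<otimes>\<^bsub>G\<^esub> a = a \<otimes>\<^bsub>G\<^esub> x}"

lemma centralizes_iff_subset_centralizer:
  "D \<subseteq> carrier G \<Longrightarrow> centralizes G D A \<longleftrightarrow> D \<subseteq> centralizer G A"
  by (auto simp: centralizes_def centralizer_def)

lemma comm_group_centralizes:
  "comm_group (G\<lparr>carrier := D\<rparr>) \<Longrightarrow> centralizes G D D"
  using comm_monoid.m_comm[OF comm_group.axioms(1)] unfolding centralizes_def by fastforce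

context group
begin

lemma subgroup_centralizer:
  assumes "A \<subseteq> carrier G"
  shows "subgroup (centralizer G A) G"
proof (rule subgroupI)
  show "centralizer G A \<subseteq> carrier G" by (auto simp: centralizer_def)
  show "centralizer G A \<noteq> {}" using assms by (auto simp: centralizer_def subsetD)
next
  fix x assume "x \<in> centralizer G A"
  then have x: "x \<in> carrier G" "\<And>a. a \<in> A \<Longrightarrow> x \<otimes> a = a \<otimes> x" by (auto simp: centralizer_def)
  have "inv x \<otimes> a = a \<otimes> inv x" if "a \<in> A" for a
  proof -
    have "inv x \<otimes> (x \<otimes> a) \<otimes> inv x = inv x \<otimes> (a \<otimes> x) \<otimes> inv x" using x(2) that by simp
    then have "a \<otimes> inv x = inv x \<otimes> a" using x(1) that assms by (simp add: m_assoc subsetD)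
    then show ?thesis by (rule sym)
  qed
  then show "inv x \<in> centralizer G A" using x(1) by (simp add: centralizer_def)
next
  fix x y assume "x \<in> centralizer G A" "y \<in> centralizer G A"
  then have x: "x \<in> carrier G" "\<And>a. a \<in> A \<Longrightarrow> x \<otimes> a = a \<otimes> x"
    and y: "y \<in> carrier G" "\<And>a. a \<in> A \<Longrightarrow> y \<otimes> a = a \<otimes> y"
    by (auto simp: centralizer_def)
  have "x \<otimes> y \<otimes> a = a \<otimes> (x \<otimes> y)" if a: "a \<in> A" for a
  proof -
    have aG: "a \<in> carrier G" using a assms by blast
    have "x \<otimes> y \<otimes> a = x \<otimes> (a \<otimes> y)" using x(1) y aG a by (simp add: m_assoc)
    also have "\<dots> = a \<otimes> (x \<otimes> y)" using x y(1) aG a by (simp add: m_assoc[symmetric])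
    finally show ?thesis .
  qed
  then show "x \<otimes> y \<in> centralizer G A" using x(1) y(1) by (simp add: centralizer_def)
qed

lemma subgroup_nat_pow_closed: "subgroup H G \<Longrightarrow> h \<in> H \<Longrightarrow> h [^] (n::nat) \<in> H"
  using subgroup_int_pow_closed[of H h "int n"] subgroup.mem_carrier by (force simp: int_pow_int)

lemma mem_subgroup_if_coprime_pows:
  assumes K: "subgroup K G" and x: "x \<in> carrier G"
    and pows: "x [^] (m::nat) \<in> K" "x [^] (n::nat) \<in> K" and "coprime m n"
  shows "x \<in> K"
proof (cases "m = 0")
  case True
  then show ?thesis using pows(2) \<open>coprime m n\<close> x by simp
next
  case False
  then obtain u v where "m * u = n * v + 1"
    using bezout_nat[of m n] \<open>coprime m n\<close> by auto
  then have "(x [^] m) [^] u = (x [^] n) [^] v \<otimes> x"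
    using x by (simp add: nat_pow_pow nat_pow_mult[symmetric])
  then have "x = inv ((x [^] n) [^] v) \<otimes> (x [^] m) [^] u"
    using x by (simp add: inv_solve_left)
  moreover have "inv ((x [^] n) [^] v) \<otimes> (x [^] m) [^] u \<in> K"
    using K pows by (simp add: subgroup_nat_pow_closed subgroup.m_closed subgroup.m_inv_closed)
  ultimately show ?thesis by simp
qed

lemma subset_subgroup_if_pi_and_pi'_elements:
  assumes fin: "finite (carrier G)" and K: "subgroup K G" and D: "subgroup D G"
    and pi: "\<And>x. x \<in> D \<Longrightarrow> pi_number \<pi> (ord x) \<Longrightarrow> x \<in> K"
    and pi': "\<And>x. x \<in> D \<Longrightarrow> pi'_number \<pi> (ord x) \<Longrightarrow> x \<in> K"
  shows "D \<subseteq> K"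
proof
  fix d assume d: "d \<in> D"
  then have dG: "d \<in> carrier G" by (rule subgroup.mem_carrier[OF D])
  then have "ord d \<noteq> 0" using ord_ge_1[OF fin dG] by simp
  then obtain m1 m2 where m: "ord d = m1 * m2" "pi_number \<pi> m1" "pi'_number \<pi> m2"
    by (rule pi_number_pi'_number_decomposition)
  have d_pow: "d [^] (m1 * m2) = \<one>" using m(1) pow_ord_eq_1[OF dG] by simp
  have "(d [^] m2) [^] m1 = \<one>" using d_pow by (simp add: nat_pow_pow[OF dG] mult.commute)
  then have "ord (d [^] m2) dvd m1" by (simp add: pow_eq_id[OF nat_pow_closed[OF dG]])
  then have m2_pow: "d [^] m2 \<in> K"
    using pi[OF subgroup_nat_pow_closed[OF D d]] pi_number_dvd[OF m(2)] by simp
  have "(d [^] m1) [^] m2 = \<one>" using d_pow by (simp add: nat_pow_pow[OF dG])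
  then have "ord (d [^] m1) dvd m2" by (simp add: pow_eq_id[OF nat_pow_closed[OF dG]])
  then have m1_pow: "d [^] m1 \<in> K"
    using pi'[OF subgroup_nat_pow_closed[OF D d]] pi'_number_dvd[OF m(3)] by simp
  show "d \<in> K"
    using mem_subgroup_if_coprime_pows[OF K dG m1_pow m2_pow coprime_pi_number_pi'_number[OF m(2,3)]] .
qed

lemma subgroup_normal_if_abelian:
  assumes "subgroup D G" "comm_group (G\<lparr>carrier := D\<rparr>)" "subgroup K G" "K \<subseteq> D"
  shows "K \<lhd> G\<lparr>carrier := D\<rparr>"
  using comm_group.normal_iff_subgroup[OF assms(2)] subgroup_incl[OF assms(3,1,4)] by blast

lemma O_pi_exists_if_abelian:
  assumes fin: "finite (carrier G)" and D: "subgroup D G" and abelian: "comm_group (G\<lparr>carrier := D\<rparr>)"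
  shows "\<exists>P. is_O_pi G \<pi> D P"
proof -
  let ?F = "\<lambda>K. subgroup K G \<and> K \<subseteq> D \<and> pi_number \<pi> (card K)"
  have "?F {\<one>}"
    using triv_subgroup subgroup.one_closed[OF D] by (simp add: pi_number_def)
  moreover have "card K < Suc (card D)" if "?F K" for K
    using that card_mono[OF finite_subset[OF subgroup.subset[OF D] fin]] by (simp add: le_imp_less_Suc)
  ultimately obtain P where P: "?F P" and max: "\<And>K. ?F K \<Longrightarrow> card K \<le> card P"
    using Lattices_Big.ex_has_greatest_nat[where f = card and P = ?F] by metis
  have P_normal: "P \<lhd> G\<lparr>carrier := D\<rparr>"
    using subgroup_normal_if_abelian[OF D abelian] P by blast
  have "K \<subseteq> P" if K: "K \<lhd> G\<lparr>carrier := D\<rparr>" "pi_set \<pi> K" for K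
  proof -
    have KG: "subgroup K G" "K \<subseteq> D"
      using K(1) D incl_subgroup normal_imp_subgroup subgroup.subset by force+
    have PK: "subgroup (P <#> K) G" "P <#> K \<subseteq> D"
      using normal_set_mult_subgroup[OF P_normal D KG] by auto
    have "card (P <#> K) dvd card P * card K"
      using card_set_mult[OF fin P[THEN conjunct1] KG(1)] by (metis dvd_triv_left)
    moreover have "pi_number \<pi> (card P * card K)"
      using P K(2) by (simp add: pi_set_iff pi_number_mult)
    ultimately have "pi_number \<pi> (card (P <#> K))" by (simp add: pi_number_dvd)
    then have "card (P <#> K) \<le> card P" using max PK by blast
    then have "P = P <#> K"
      using card_seteq[OF finite_subset[OF PK(2) finite_subset[OF subgroup.subset[OF D] fin]]]
        subset_set_mult(1)[OF P[THEN conjunct1] KG(1)] by blast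
    then show ?thesis using subset_set_mult(2)[OF P[THEN conjunct1] KG(1)] by blast
  qed
  then have "is_O_pi G \<pi> D P"
    using P P_normal by (simp add: is_O_pi_def pi_set_iff)
  then show ?thesis ..
qed

lemma pi_element_mem_O_pi:
  assumes fin: "finite (carrier G)" and D: "subgroup D G" and abelian: "comm_group (G\<lparr>carrier := D\<rparr>)"
    and P: "is_O_pi G \<pi> D P" and x: "x \<in> D" "pi_number \<pi> (ord x)"
  shows "x \<in> P"
proof -
  have xG: "x \<in> carrier G" using subgroup.mem_carrier[OF D x(1)] .
  have gen: "subgroup (generate G {x}) G" "generate G {x} \<subseteq> D"
    using generate_is_subgroup xG generate_subgroup_incl[OF _ D] x(1) by auto
  then have "generate G {x} \<lhd> G\<lparr>carrier := D\<rparr>"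
    by (rule subgroup_normal_if_abelian[OF D abelian])
  moreover have "pi_set \<pi> (generate G {x})"
    using x(2) generate_pow_card[OF xG] by (simp add: pi_set_iff)
  ultimately have "generate G {x} \<subseteq> P" using P by (simp add: is_O_pi_def)
  then show ?thesis using generate.incl[of x "{x}" G] by blast
qed

lemma power_automorphisms_conj_mem:
  assumes "induces_power_automorphisms G D" "g \<in> carrier G" "subgroup K G" "K \<subseteq> D" "k \<in> K"
  shows "g \<otimes> k \<otimes> inv g \<in> K"
  using assms unfolding induces_power_automorphisms_def by blast

lemma power_automorphisms_normal:
  assumes "induces_power_automorphisms G D" "subgroup K G" "K \<subseteq> D"
  shows "K \<lhd> G"
  using assms power_automorphisms_conj_mem by (auto simp: normal_inv_iff)

lemma commute_if_commutator_eq_one: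
  assumes "x \<in> carrier G" "y \<in> carrier G" "x \<otimes> y \<otimes> inv x \<otimes> inv y = \<one>"
  shows "x \<otimes> y = y \<otimes> x"
proof -
  have "x \<otimes> y \<otimes> inv x = y" using assms inv_solve_right'[of \<one> "x \<otimes> y \<otimes> inv x" y] by simp
  then show ?thesis using assms inv_solve_right'[of y "x \<otimes> y" x] by simp
qed

lemma normal_complement_centralizes:
  assumes H: "subgroup H G" and N: "N \<lhd> G\<lparr>carrier := H\<rparr>"
    and P: "P \<lhd> G" "centralizes G P P"
    and complement: "N \<inter> P = {\<one>}" "N <#> P = H"
  shows "centralizes G P H"
  unfolding centralizes_def
proof (intro ballI)
  fix w h assume w: "w \<in> P" and "h \<in> H"
  then obtain n w' where nw': "n \<in> N" "w' \<in> P" "h = n \<otimes> w'"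
    using complement(2) unfolding set_mult_def by blast
  interpret N: normal N "G\<lparr>carrier := H\<rparr>" by (rule N)
  have NG: "subgroup N G" using incl_subgroup[OF H N.subgroup_axioms] .
  have wH: "w \<in> H" using w complement(2) subset_set_mult(2)[OF NG normal_imp_subgroup[OF P(1)]] by blast
  have carrier: "n \<in> carrier G" "w \<in> carrier G" "w' \<in> carrier G"
    using nw' w NG normal_imp_subgroup[OF P(1)] subgroup.mem_carrier by metis+
  have "n \<otimes> w \<otimes> inv n \<otimes> inv w \<in> P"
    using P(1) w carrier by (simp add: normal_inv_iff subgroup.m_closed subgroup.m_inv_closed)
  moreover have "w \<otimes> inv n \<otimes> inv w \<in> N"
    using N.inv_op_closed2[of w "inv n"] wH subgroup.m_inv_closed[OF NG nw'(1)] H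
    by (simp add: m_inv_consistent)
  then have "n \<otimes> w \<otimes> inv n \<otimes> inv w \<in> N"
    using nw'(1) carrier subgroup.m_closed[OF NG] by (simp add: m_assoc)
  ultimately have "n \<otimes> w = w \<otimes> n"
    using complement(1) carrier by (intro commute_if_commutator_eq_one) auto
  then have "w \<otimes> h = n \<otimes> (w \<otimes> w')"
    using carrier by (simp add: nw'(3) m_assoc[symmetric])
  also have "\<dots> = h \<otimes> w"
    using P(2) w nw'(2) carrier by (simp add: nw'(3) centralizes_def m_assoc)
  finally show "w \<otimes> h = h \<otimes> w" .
qed

lemma O_pi_subset_centralizer:
  assumes power: "induces_power_automorphisms G D" and D: "subgroup D G"
    and abelian: "comm_group (G\<lparr>carrier := D\<rparr>)" and P: "is_O_pi G \<pi> D P"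
    and H: "subgroup H G" and N: "N \<lhd> G\<lparr>carrier := H\<rparr>" "N \<inter> P = {\<one>}" "N <#> P = H"
    and A: "A \<subseteq> H"
  shows "P \<subseteq> centralizer G A"
proof -
  have PD: "subgroup P G" "P \<subseteq> D"
    using P D incl_subgroup normal_imp_subgroup subgroup.subset unfolding is_O_pi_def by force+
  have "centralizes G P P"
    using comm_group_centralizes[OF abelian] PD(2) unfolding centralizes_def by blast
  then have "centralizes G P H"
    using normal_complement_centralizes[OF H N(1) power_automorphisms_normal[OF power PD] _ N(2,3)] by simp
  then show ?thesis
    using A PD(1) subgroup.mem_carrier unfolding centralizes_def centralizer_def by fastforce
qed

lemma hall_pi_subgroup_conjugate:
  assumes "g \<in> carrier G" "hall_pi_subgroup G \<pi> H"
  shows "hall_pi_subgroup G \<pi> {g \<otimes> h \<otimes> inv g | h. h \<in> H}"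
  using assms conjugate_subgroup card_conjugate by (simp add: hall_pi_subgroup_iff)

lemma pi'_element_mem_centralizer:
  assumes fin: "finite (carrier G)" and power: "induces_power_automorphisms G D" and D: "subgroup D G"
    and y: "y \<in> D" "pi'_number \<pi> (ord y)"
    and H: "hall_pi_subgroup G \<pi> H" and A: "\<And>H'. hall_pi_subgroup G \<pi> H' \<Longrightarrow> A \<subseteq> H'"
  shows "y \<in> centralizer G A"
proof -
  have yG: "y \<in> carrier G" using subgroup.mem_carrier[OF D y(1)] .
  let ?Y = "generate G {y}"
  have Y: "subgroup ?Y G" "?Y \<subseteq> D" "y \<in> ?Y"
    using generate_is_subgroup yG generate_subgroup_incl[OF _ D] y(1) generate.incl[of y "{y}" G] by auto
  have HG: "subgroup H G" "pi_number \<pi> (card H)" using H by (auto simp: hall_pi_subgroup_iff)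
  have "coprime (card H) (card ?Y)"
    using coprime_pi_number_pi'_number[OF HG(2)] y(2) generate_pow_card[OF yG] by simp
  then have trivial: "H \<inter> ?Y = {\<one>}" by (rule subgroups_Int_eq_one_if_coprime[OF fin HG(1) Y(1)])
  have "y \<otimes> a = a \<otimes> y" if a: "a \<in> A" for a
  proof -
    have "a \<in> {y \<otimes> h \<otimes> inv y | h. h \<in> H}"
      using A[OF hall_pi_subgroup_conjugate[OF yG H]] a by blast
    then obtain h where h: "h \<in> H" "a = y \<otimes> h \<otimes> inv y" by blast
    have aH: "a \<in> H" using A[OF H] a by blast
    have carrier: "a \<in> carrier G" "h \<in> carrier G"
      using subgroup.mem_carrier[OF HG(1)] aH h(1) by auto
    have "inv y \<otimes> a \<otimes> y = h" using h(2) yG carrier by (simp add: m_assoc)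
    define c where "c = inv a \<otimes> (inv y \<otimes> a \<otimes> y)"
    have c_H: "c \<in> H"
      unfolding c_def \<open>inv y \<otimes> a \<otimes> y = h\<close>
      by (rule subgroup.m_closed[OF HG(1) subgroup.m_inv_closed[OF HG(1) aH] h(1)])
    have "inv a \<otimes> inv y \<otimes> a \<in> ?Y"
      using power_automorphisms_conj_mem[OF power inv_closed[OF carrier(1)] Y(1,2)
          subgroup.m_inv_closed[OF Y(1,3)]] carrier by simp
    then have "(inv a \<otimes> inv y \<otimes> a) \<otimes> y \<in> ?Y" using subgroup.m_closed[OF Y(1) _ Y(3)] by simp
    then have "c \<in> ?Y" unfolding c_def using carrier yG by (simp add: m_assoc)
    with c_H have "c = \<one>" using trivial by blast
    then have "inv y \<otimes> a \<otimes> y = a"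
      unfolding c_def using carrier yG inv_solve_left'[of "\<one>" a] by simp
    then have "y \<otimes> a = y \<otimes> (inv y \<otimes> a \<otimes> y)" by simp
    also have "\<dots> = a \<otimes> y" using carrier yG by (simp add: m_assoc)
    finally show ?thesis .
  qed
  then show ?thesis using yG by (simp add: centralizer_def)
qed

end

theorem lemma2p7:
  fixes G (structure) and Sig :: "nat set set" and D M A :: "'a set"
  assumes "group G" and "finite (carrier G)" and "solvable G"
    and "sigma_partition Sig"
    \<comment> \<open>G = D \<rtimes> M\<close>
    and "D \<lhd> G" and "subgroup M G" and "D \<inter> M = {\<one>}" and "D <#> M = carrier G"
    \<comment> \<open>(i)\<close>
    and "hall_subgroup G D" and "comm_group (G\<lparr>carrier := D\<rparr>)" and "odd (card D)"
    and "sigma_nilpotent G Sig M" and "modular_subgroup_lattice G M"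
    \<comment> \<open>(ii)\<close>
    and "induces_power_automorphisms G D"
    \<comment> \<open>(iii)\<close>
    and "\<forall>s\<in>Sig. \<forall>Op. is_O_pi G s D Op \<longrightarrow>
           (\<exists>H N. hall_pi_subgroup G s H \<and> N \<lhd> G\<lparr>carrier := H\<rparr> \<and>
                  N \<inter> Op = {\<one>} \<and> N <#> Op = H)"
    and "sigma_primary Sig A" and "sigma_subnormal G Sig A" and "subgroup A G" and "A \<subseteq> M"
  shows "centralizes G D A"
proof -
  interpret group G by fact
  have fin: "finite (carrier G)" by fact
  have D: "subgroup D G" using \<open>D \<lhd> G\<close> by (rule normal_imp_subgroup)
  obtain s where s: "s \<in> Sig" "pi_set s A"
    using \<open>sigma_primary Sig A\<close> unfolding sigma_primary_def by blast
  obtain P where P: "is_O_pi G s D P"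
    using O_pi_exists_if_abelian[OF fin D \<open>comm_group (G\<lparr>carrier := D\<rparr>)\<close>] by blast
  then obtain H N where H: "hall_pi_subgroup G s H"
    and N: "N \<lhd> G\<lparr>carrier := H\<rparr>" "N \<inter> P = {\<one>}" "N <#> P = H"
    using assms(15) s(1) by blast
  have A_Hall: "\<And>H'. hall_pi_subgroup G s H' \<Longrightarrow> A \<subseteq> H'"
    using sigma_subnormal_pi_subgroup_subset_hall[OF fin \<open>sigma_partition Sig\<close> s(1)
        \<open>sigma_subnormal G Sig A\<close> s(2)] .
  have P_centralizer: "P \<subseteq> centralizer G A"
    using O_pi_subset_centralizer[OF assms(14) D \<open>comm_group (G\<lparr>carrier := D\<rparr>)\<close> P _ N A_Hall[OF H]]
      H by (simp add: hall_pi_subgroup_iff)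
  have "D \<subseteq> centralizer G A"
  proof (rule subset_subgroup_if_pi_and_pi'_elements[OF fin _ D])
    show "subgroup (centralizer G A) G"
      using \<open>subgroup A G\<close> by (intro subgroup_centralizer subgroup.subset)
    show "x \<in> centralizer G A" if "x \<in> D" "pi_number s (ord x)" for x
      using pi_element_mem_O_pi[OF fin D \<open>comm_group (G\<lparr>carrier := D\<rparr>)\<close> P that] P_centralizer by blast
    show "x \<in> centralizer G A" if "x \<in> D" "pi'_number s (ord x)" for x
      using pi'_element_mem_centralizer[OF fin assms(14) D that H A_Hall] .
  qed
  then show ?thesis
    using centralizes_iff_subset_centralizer subgroup.subset[OF D] by blast
qed

end
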